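(* Let $X$ be an irreducible affine variety over $\mathbb{C}$, $\mathcal{F}$ an algebraic foliation on $X$, and $F$ a finite-dimensional $\mathbb{C}$-vector subspace of $\mathcal{O}_X$. Then the map $\varphi_F:X\to\mathbb{N}$, $\varphi_F(x)=\dim_{\mathbb{C}}F-\dim_{\mathbb{C}}(I(\mathcal{F},x)\cap F)$, is lower semi-continuous for the Zariski topology, i.e. $\varphi_F^{-1}([0,r])$ is Zariski closed for every $r$.
   Context: $\mathcal{O}_X$ is the ring of regular functions on $X$; an algebraic foliation $\mathcal{F}$ is a collection of $\mathbb{C}$-derivations of $\mathcal{O}_X$ stable under Lie bracket. For $x\in X$, $I(\mathcal{F},x)$ is the largest ideal $I$ of $\mathcal{O}_X$ contained in the maximal ideal of $x$ with $\partial(I)\subseteq I$ for all $\partial\in\mathcal{F}$. *)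

theory Defs
  imports Complex_Main "HOL-Library.Function_Algebras"
begin

text \<open>Affine space C^n is modelled as the type of functions 'n => complex with 'n finite.
  Polynomial functions on C^n are generated by constants and coordinates under + and *.\<close>

inductive_set polyfun :: "(('n::finite \<Rightarrow> complex) \<Rightarrow> complex) set" where
  pf_const: "(\<lambda>x. c) \<in> polyfun"
| pf_coord: "(\<lambda>x. x i) \<in> polyfun"
| pf_add: "p \<in> polyfun \<Longrightarrow> q \<in> polyfun \<Longrightarrow> (\<lambda>x. p x + q x) \<in> polyfun"
| pf_mult: "p \<in> polyfun \<Longrightarrow> q \<in> polyfun \<Longrightarrow> (\<lambda>x. p x * q x) \<in> polyfun"

definition zariski_closed :: "('n::finite \<Rightarrow> complex) set \<Rightarrow> bool" where
  "zariski_closed A \<longleftrightarrow> (\<exists>S \<subseteq> polyfun. A = {x. \<forall>p\<in>S. p x = 0})"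

definition irreducible_affine_variety :: "('n::finite \<Rightarrow> complex) set \<Rightarrow> bool" where
  "irreducible_affine_variety X \<longleftrightarrow> zariski_closed X \<and> X \<noteq> {} \<and>
     (\<forall>A B. zariski_closed A \<longrightarrow> zariski_closed B \<longrightarrow> X = A \<union> B \<longrightarrow> X = A \<or> X = B)"

text \<open>The ring O_X of regular functions on X: restrictions of polynomial functions to X,
  represented canonically as functions that vanish outside X.\<close>
definition regular_functions :: "('n::finite \<Rightarrow> complex) set \<Rightarrow> (('n \<Rightarrow> complex) \<Rightarrow> complex) set" where
  "regular_functions X = {f. \<exists>p\<in>polyfun. f = (\<lambda>x. if x \<in> X then p x else 0)}"

definition cscale :: "complex \<Rightarrow> ('a \<Rightarrow> complex) \<Rightarrow> ('a \<Rightarrow> complex)" where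
  "cscale c f = (\<lambda>x. c * f x)"

definition is_derivation ::
  "('n::finite \<Rightarrow> complex) set \<Rightarrow> ((('n \<Rightarrow> complex) \<Rightarrow> complex) \<Rightarrow> (('n \<Rightarrow> complex) \<Rightarrow> complex)) \<Rightarrow> bool" where
  "is_derivation X D \<longleftrightarrow>
     (\<forall>f\<in>regular_functions X. D f \<in> regular_functions X) \<and>
     (\<forall>f\<in>regular_functions X. \<forall>g\<in>regular_functions X. D (f + g) = D f + D g) \<and>
     (\<forall>c. \<forall>f\<in>regular_functions X. D (cscale c f) = cscale c (D f)) \<and>
     (\<forall>f\<in>regular_functions X. \<forall>g\<in>regular_functions X. D (f * g) = f * D g + g * D f)"

definition algebraic_foliation ::
  "('n::finite \<Rightarrow> complex) set \<Rightarrow> ((('n \<Rightarrow> complex) \<Rightarrow> complex) \<Rightarrow> (('n \<Rightarrow> complex) \<Rightarrow> complex)) set \<Rightarrow> bool" where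
  "algebraic_foliation X Fol \<longleftrightarrow>
     (\<forall>D\<in>Fol. is_derivation X D) \<and>
     (\<forall>D1\<in>Fol. \<forall>D2\<in>Fol. \<exists>D\<in>Fol. \<forall>f\<in>regular_functions X. D f = D1 (D2 f) - D2 (D1 f))"

definition ideal_of :: "('n::finite \<Rightarrow> complex) set \<Rightarrow> (('n \<Rightarrow> complex) \<Rightarrow> complex) set \<Rightarrow> bool" where
  "ideal_of X I \<longleftrightarrow> I \<subseteq> regular_functions X \<and> 0 \<in> I \<and>
     (\<forall>f\<in>I. \<forall>g\<in>I. f + g \<in> I) \<and> (\<forall>a\<in>regular_functions X. \<forall>f\<in>I. a * f \<in> I)"

definition max_ideal :: "('n::finite \<Rightarrow> complex) set \<Rightarrow> ('n \<Rightarrow> complex) \<Rightarrow> (('n \<Rightarrow> complex) \<Rightarrow> complex) set" where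
  "max_ideal X x = {f \<in> regular_functions X. f x = 0}"

definition invariant_ideal_at where
  "invariant_ideal_at X Fol x I \<longleftrightarrow> ideal_of X I \<and> I \<subseteq> max_ideal X x \<and> (\<forall>D\<in>Fol. \<forall>f\<in>I. D f \<in> I)"

definition I_fol where
  "I_fol X Fol x = (GREATEST I. invariant_ideal_at X Fol x I)"

definition phi_F where
  "phi_F X Fol F x = vector_space.dim cscale F - vector_space.dim cscale (I_fol X Fol x \<inter> F)"

end

theory Submission
  imports Defs "Jordan_Normal_Form.Determinant"
begin

text \<open>
  A regular function f lies in I(F,x) iff (w f)(x) = 0 for every word w = D_1 ... D_m in the
  derivations of the foliation: by the Leibniz rule these functions form an ideal stable under
  the derivations, and every invariant ideal inside the maximal ideal of x consists of such
  functions. So phi_F(x) is the rank of the linear forms f \<mapsto> (w f)(x) on F. As F is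
  finite-dimensional, finitely many words suffice, and phi_F(x) > r iff there are
  g_0, ..., g_r in F, words w_1, ..., w_k and a constant matrix M with
  det (M ((w_l g_j)(x))) \<noteq> 0; if the matrix ((w_l g_j)(x)) has trivial kernel, its conjugate
  transpose serves as M. These determinants are polynomial on X, so the set {phi_F \<le> r} is
  their common zero locus in X.
\<close>

lemma regular_functions_iff:
  "f \<in> regular_functions X \<longleftrightarrow> (\<exists>p\<in>polyfun. f = (\<lambda>x. if x \<in> X then p x else 0))"
  unfolding regular_functions_def by simp

lemma regular_functions_zero: "0 \<in> regular_functions X"
  unfolding regular_functions_iff by (auto intro!: bexI[OF _ polyfun.pf_const[of 0]])

lemma regular_functions_add:
  assumes "f \<in> regular_functions X" "g \<in> regular_functions X"
  shows "f + g \<in> regular_functions X"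
proof -
  obtain p q where "p \<in> polyfun" "q \<in> polyfun"
    "f = (\<lambda>x. if x \<in> X then p x else 0)" "g = (\<lambda>x. if x \<in> X then q x else 0)"
    using assms unfolding regular_functions_iff by blast
  then show ?thesis
    unfolding regular_functions_iff by (auto intro!: bexI[OF _ polyfun.pf_add])
qed

lemma regular_functions_mult:
  assumes "f \<in> regular_functions X" "g \<in> regular_functions X"
  shows "f * g \<in> regular_functions X"
proof -
  obtain p q where "p \<in> polyfun" "q \<in> polyfun"
    "f = (\<lambda>x. if x \<in> X then p x else 0)" "g = (\<lambda>x. if x \<in> X then q x else 0)"
    using assms unfolding regular_functions_iff by blast
  then show ?thesis
    unfolding regular_functions_iff by (auto intro!: bexI[OF _ polyfun.pf_mult])
qed

lemma regular_functions_cscale: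
  assumes "f \<in> regular_functions X"
  shows "cscale c f \<in> regular_functions X"
proof -
  obtain p where "p \<in> polyfun" "f = (\<lambda>x. if x \<in> X then p x else 0)"
    using assms unfolding regular_functions_iff by blast
  then show ?thesis
    unfolding regular_functions_iff cscale_def
    by (auto intro!: bexI[OF _ polyfun.pf_mult[OF polyfun.pf_const]])
qed

interpretation cvs: vector_space "cscale :: complex \<Rightarrow> ('a \<Rightarrow> complex) \<Rightarrow> 'a \<Rightarrow> complex"
  by unfold_locales (auto simp: cscale_def fun_eq_iff algebra_simps)

lemma subspace_regular_functions: "cvs.subspace (regular_functions X)"
  by (intro cvs.subspaceI regular_functions_zero regular_functions_add regular_functions_cscale)

definition polynomial_on :: "('n::finite \<Rightarrow> complex) set \<Rightarrow> (('n \<Rightarrow> complex) \<Rightarrow> complex) \<Rightarrow> bool" where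
  "polynomial_on X f \<longleftrightarrow> (\<exists>p\<in>polyfun. \<forall>x\<in>X. f x = p x)"

lemma polynomial_on_const: "polynomial_on X (\<lambda>x. c)"
  unfolding polynomial_on_def by (rule bexI[OF _ polyfun.pf_const[of c]]) simp

lemma polynomial_on_add:
  assumes "polynomial_on X f" "polynomial_on X g"
  shows "polynomial_on X (\<lambda>x. f x + g x)"
proof -
  obtain p q where "p \<in> polyfun" "q \<in> polyfun" "\<forall>x\<in>X. f x = p x" "\<forall>x\<in>X. g x = q x"
    using assms unfolding polynomial_on_def by blast
  then show ?thesis
    unfolding polynomial_on_def by (auto intro!: bexI[OF _ polyfun.pf_add])
qed

lemma polynomial_on_mult:
  assumes "polynomial_on X f" "polynomial_on X g"
  shows "polynomial_on X (\<lambda>x. f x * g x)"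
proof -
  obtain p q where "p \<in> polyfun" "q \<in> polyfun" "\<forall>x\<in>X. f x = p x" "\<forall>x\<in>X. g x = q x"
    using assms unfolding polynomial_on_def by blast
  then show ?thesis
    unfolding polynomial_on_def by (auto intro!: bexI[OF _ polyfun.pf_mult])
qed

lemma polynomial_on_sum:
  "finite A \<Longrightarrow> (\<And>a. a \<in> A \<Longrightarrow> polynomial_on X (f a)) \<Longrightarrow> polynomial_on X (\<lambda>x. \<Sum>a\<in>A. f a x)"
  by (induction A rule: finite_induct) (auto intro: polynomial_on_const polynomial_on_add)

lemma polynomial_on_prod:
  "finite A \<Longrightarrow> (\<And>a. a \<in> A \<Longrightarrow> polynomial_on X (f a)) \<Longrightarrow> polynomial_on X (\<lambda>x. \<Prod>a\<in>A. f a x)"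
  by (induction A rule: finite_induct) (auto intro: polynomial_on_const polynomial_on_mult)

lemma polynomial_on_det:
  assumes "\<And>x. M x \<in> carrier_mat n n"
    and "\<And>i j. i < n \<Longrightarrow> j < n \<Longrightarrow> polynomial_on X (\<lambda>x. M x $$ (i, j))"
  shows "polynomial_on X (\<lambda>x. det (M x))"
proof -
  have "polynomial_on X
      (\<lambda>x. \<Sum>p\<in>{p. p permutes {0..<n}}. signof p * (\<Prod>i = 0..<n. M x $$ (i, p i)))"
    using assms(2)
    by (intro polynomial_on_sum polynomial_on_mult polynomial_on_const polynomial_on_prod)
      (auto simp: finite_permutations permutes_in_image)
  then show ?thesis
    by (simp only: det_def'[OF assms(1)])
qed

lemma polynomial_on_regular: "f \<in> regular_functions X \<Longrightarrow> polynomial_on X f"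
  unfolding regular_functions_def polynomial_on_def by auto

lemma zariski_closed_zeros_within:
  assumes "zariski_closed X" and "\<And>i. i \<in> I \<Longrightarrow> polynomial_on X (f i)"
  shows "zariski_closed {x \<in> X. \<forall>i\<in>I. f i x = 0}"
proof -
  obtain S where S: "S \<subseteq> polyfun" "X = {x. \<forall>p\<in>S. p x = 0}"
    using assms(1) unfolding zariski_closed_def by blast
  define T where "T = {p \<in> polyfun. \<exists>i\<in>I. \<forall>x\<in>X. f i x = p x}"
  have "\<exists>p\<in>T. \<forall>x\<in>X. f i x = p x" if "i \<in> I" for i
    using assms(2)[OF that] that unfolding polynomial_on_def T_def by blast
  then have "(\<forall>i\<in>I. f i x = 0) \<longleftrightarrow> (\<forall>p\<in>T. p x = 0)" if "x \<in> X" for x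
    using that unfolding T_def by fastforce
  then have "{x \<in> X. \<forall>i\<in>I. f i x = 0} = {x. \<forall>p\<in>S \<union> T. p x = 0}"
    using S(2) by blast
  moreover have "S \<union> T \<subseteq> polyfun"
    using S(1) T_def by blast
  ultimately show ?thesis
    unfolding zariski_closed_def by blast
qed

section \<open>Dimension counting in finite-dimensional subspaces\<close>

definition independent_modulo ::
    "('a::zero \<Rightarrow> 'b \<Rightarrow> 'b::comm_monoid_add) \<Rightarrow> 'b set \<Rightarrow> nat \<Rightarrow> (nat \<Rightarrow> 'b) \<Rightarrow> bool" where
  "independent_modulo scale K n g \<longleftrightarrow> (\<forall>c. (\<Sum>j<n. scale (c j) (g j)) \<in> K \<longrightarrow> (\<forall>j<n. c j = 0))"

context vector_space
begin

lemma finite_dim_basis_exists: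
  assumes "finite B" "V \<subseteq> span B"
  obtains C where "finite C" "independent C" "C \<subseteq> V" "V \<subseteq> span C" "card C = dim V"
proof -
  obtain C where C: "C \<subseteq> V" "independent C" "V \<subseteq> span C" "card C = dim V"
    by (rule basis_exists)
  then have "finite C"
    using independent_span_bound[OF assms(1)] assms(2) by blast
  with C that show ?thesis by blast
qed

lemma dim_le_dim_if_subset_span:
  assumes "finite B" "V \<subseteq> span B" "U \<subseteq> span V"
  shows "dim U \<le> dim V"
proof -
  obtain C where C: "finite C" "independent C" "C \<subseteq> V" "V \<subseteq> span C" "card C = dim V"
    by (rule finite_dim_basis_exists[OF assms(1,2)])
  have "U \<subseteq> span C"
    using assms(3) span_mono[OF C(4)] unfolding span_span by (rule subset_trans)
  then show ?thesis
    using dim_le_card[OF _ C(1)] C(5) by simp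
qed

lemma dim_insert_not_in_span:
  assumes "finite B" "V \<subseteq> span B" "a \<notin> span V"
  shows "dim (insert a V) = Suc (dim V)"
proof -
  obtain C where C: "finite C" "independent C" "C \<subseteq> V" "V \<subseteq> span C" "card C = dim V"
    by (rule finite_dim_basis_exists[OF assms(1,2)])
  then have span_C: "span C = span V"
    using span_superset[of V] by (auto simp: span_eq)
  then have "independent (insert a C)" "a \<notin> C"
    using independent_insertI[OF _ C(2)] assms(3) span_base by auto
  moreover have "span (insert a C) = span (insert a V)"
    using span_C by (simp add: span_insert)
  ultimately show ?thesis
    using C dim_eq_card[of "insert a C" "insert a V"] by simp
qed

lemma dim_strict_mono_subspace:
  assumes "finite B" "V \<subseteq> span B" "subspace U" "U \<subset> V"
  shows "dim U < dim V"
proof -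
  obtain a where a: "a \<in> V" "a \<notin> U"
    using assms(4) by blast
  have "U \<subseteq> span B"
    using assms(2,4) by blast
  moreover have "a \<notin> span U"
    using a(2) by (simp add: span_eq_iff[THEN iffD2, OF assms(3)])
  ultimately have "dim (insert a U) = Suc (dim U)"
    by (rule dim_insert_not_in_span[OF assms(1)])
  moreover have "dim (insert a U) \<le> dim V"
    using dim_le_dim_if_subset_span[OF assms(1,2)] a assms(4) span_superset[of V] by blast
  ultimately show ?thesis by simp
qed

lemma independent_modulo_Suc:
  assumes "subspace K"
  shows "independent_modulo scale K (Suc n) g \<longleftrightarrow>
    g 0 \<notin> K \<and> independent_modulo scale (span (insert (g 0) K)) n (g \<circ> Suc)"
proof -
  have split: "(\<Sum>j<Suc n. c j *s g j) = c 0 *s g 0 + (\<Sum>j<n. c (Suc j) *s g (Suc j))" for c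
    by (subst sum.lessThan_Suc_shift) simp
  have span_insert_K: "v \<in> span (insert (g 0) K) \<longleftrightarrow> (\<exists>k. v - k *s g 0 \<in> K)" for v
    by (simp add: span_breakdown_eq span_eq_iff[THEN iffD2, OF assms])
  show ?thesis
  proof (intro iffI conjI)
    assume indep: "independent_modulo scale K (Suc n) g"
    show "g 0 \<notin> K"
    proof
      assume "g 0 \<in> K"
      then have "(\<Sum>j<Suc n. case_nat 1 (\<lambda>_. 0) j *s g j) \<in> K"
        unfolding split by simp
      then have "\<forall>j<Suc n. case_nat 1 (\<lambda>_. 0) j = (0::'a)"
        by (rule spec[OF indep[unfolded independent_modulo_def], of "case_nat 1 (\<lambda>_. 0)", THEN mp])
      then show False
        by auto
    qed
    show "independent_modulo scale (span (insert (g 0) K)) n (g \<circ> Suc)"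
      unfolding independent_modulo_def
    proof (rule allI, rule impI)
      fix c assume "(\<Sum>j<n. c j *s (g \<circ> Suc) j) \<in> span (insert (g 0) K)"
      then obtain k where "(\<Sum>j<n. c j *s g (Suc j)) - k *s g 0 \<in> K"
        unfolding span_insert_K by auto
      then have "(\<Sum>j<Suc n. case_nat (- k) c j *s g j) \<in> K"
        unfolding split by (simp add: scale_minus_left algebra_simps)
      then have "\<forall>j<Suc n. case_nat (- k) c j = 0"
        by (rule spec[OF indep[unfolded independent_modulo_def], of "case_nat (- k) c", THEN mp])
      then show "\<forall>j<n. c j = 0"
        by auto
    qed
  next
    assume "g 0 \<notin> K \<and> independent_modulo scale (span (insert (g 0) K)) n (g \<circ> Suc)"
    then have g0: "g 0 \<notin> K" and indep: "independent_modulo scale (span (insert (g 0) K)) n (g \<circ> Suc)"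
      by auto
    show "independent_modulo scale K (Suc n) g"
      unfolding independent_modulo_def
    proof (rule allI, rule impI)
      fix c assume c: "(\<Sum>j<Suc n. c j *s g j) \<in> K"
      then have "(\<Sum>j<n. c (Suc j) *s g (Suc j)) - (- c 0) *s g 0 \<in> K"
        unfolding split by (simp add: scale_minus_left algebra_simps)
      then have "(\<Sum>j<n. c (Suc j) *s (g \<circ> Suc) j) \<in> span (insert (g 0) K)"
        unfolding span_insert_K comp_def by (rule exI)
      then have tail: "\<forall>j<n. c (Suc j) = 0"
        by (rule spec[OF indep[unfolded independent_modulo_def], of "\<lambda>j. c (Suc j)", THEN mp])
      then have "c 0 *s g 0 \<in> K"
        using c unfolding split by simp
      then have "c 0 = 0"
        using g0 assms subspace_scale[of K "c 0 *s g 0" "inverse (c 0)"] by (cases "c 0 = 0") auto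
      with tail show "\<forall>j<Suc n. c j = 0"
        by (auto simp: less_Suc_eq_0_disj)
    qed
  qed
qed

lemma dim_add_le_iff_independent_modulo:
  assumes "finite B" "F \<subseteq> span B" "subspace F" "subspace K" "K \<subseteq> F"
  shows "dim K + n \<le> dim F \<longleftrightarrow> (\<exists>g. (\<forall>j<n. g j \<in> F) \<and> independent_modulo scale K n g)"
  using assms(4,5)
proof (induction n arbitrary: K)
  case 0
  then show ?case
    using dim_le_dim_if_subset_span[OF assms(1,2)] span_superset[of F]
    by (auto simp: independent_modulo_def)
next
  case (Suc n)
  have extend: "subspace (span (insert a K)) \<and> span (insert a K) \<subseteq> F \<and>
      dim (span (insert a K)) = Suc (dim K)" if "a \<in> F" "a \<notin> K" for a
  proof -
    have "K \<subseteq> span B" "a \<notin> span K"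
      using that Suc.prems assms(2) by (auto simp: span_eq_iff[THEN iffD2, OF Suc.prems(1)])
    then show ?thesis
      using that Suc.prems assms(3) span_minimal[of "insert a K" F] dim_insert_not_in_span[OF assms(1)]
      by auto
  qed
  show ?case
  proof
    assume "dim K + Suc n \<le> dim F"
    moreover have "K \<subseteq> span B"
      using Suc.prems(2) assms(2) by blast
    ultimately have "\<not> F \<subseteq> K"
      using dim_le_dim_if_subset_span[OF assms(1), of K F] span_superset[of K] by auto
    then obtain a where a: "a \<in> F" "a \<notin> K"
      by blast
    moreover have "dim (span (insert a K)) + n \<le> dim F"
      using extend[OF a] \<open>dim K + Suc n \<le> dim F\<close> by simp
    ultimately obtain g where "\<forall>j<n. g j \<in> F" "independent_modulo scale (span (insert a K)) n g"
      using Suc.IH[of "span (insert a K)"] extend by blast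
    then show "\<exists>g. (\<forall>j<Suc n. g j \<in> F) \<and> independent_modulo scale K (Suc n) g"
      using a by (intro exI[of _ "case_nat a g"])
        (auto simp: independent_modulo_Suc[OF Suc.prems(1)] less_Suc_eq_0_disj comp_def)
  next
    assume "\<exists>g. (\<forall>j<Suc n. g j \<in> F) \<and> independent_modulo scale K (Suc n) g"
    then obtain g where g: "\<forall>j<Suc n. g j \<in> F" "g 0 \<notin> K"
        "independent_modulo scale (span (insert (g 0) K)) n (g \<circ> Suc)"
      using independent_modulo_Suc[OF Suc.prems(1)] by blast
    moreover have "\<forall>j<n. (g \<circ> Suc) j \<in> F"
      using g(1) by simp
    ultimately have "dim (span (insert (g 0) K)) + n \<le> dim F"
      using Suc.IH[of "span (insert (g 0) K)"] extend[of "g 0"] by blast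
    then show "dim K + Suc n \<le> dim F"
      using extend[of "g 0"] g by simp
  qed
qed

lemma finite_subfamily_Inter_eq:
  assumes "finite B" "F \<subseteq> span B" "subspace F" "\<And>w. w \<in> W \<Longrightarrow> subspace (H w)"
  obtains S where "finite S" "S \<subseteq> W" "F \<inter> (\<Inter>w\<in>S. H w) = F \<inter> (\<Inter>w\<in>W. H w)"
proof -
  let ?d = "\<lambda>S. dim (F \<inter> (\<Inter>w\<in>S. H w))"
  have "\<exists>S. (finite S \<and> S \<subseteq> W) \<and> (\<forall>S'. finite S' \<and> S' \<subseteq> W \<longrightarrow> ?d S \<le> ?d S')"
    by (rule ex_has_least_nat[of _ "{}"]) simp
  then obtain S where S: "finite S" "S \<subseteq> W"
    and minimal: "\<forall>S'. finite S' \<and> S' \<subseteq> W \<longrightarrow> ?d S \<le> ?d S'"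
    by blast
  have "F \<inter> (\<Inter>w\<in>S. H w) \<subseteq> H w" if w: "w \<in> W" for w
  proof (rule ccontr)
    assume "\<not> F \<inter> (\<Inter>w\<in>S. H w) \<subseteq> H w"
    then have "F \<inter> (\<Inter>w\<in>insert w S. H w) \<subset> F \<inter> (\<Inter>w\<in>S. H w)"
      by auto
    moreover have "subspace (F \<inter> (\<Inter>w\<in>insert w S. H w))"
      using S(2) w by (intro subspace_inter assms(3) subspace_Int assms(4)) auto
    moreover have "F \<inter> (\<Inter>w\<in>S. H w) \<subseteq> span B"
      using assms(2) by auto
    ultimately have "?d (insert w S) < ?d S"
      using dim_strict_mono_subspace[OF assms(1)] by simp
    moreover have "?d S \<le> ?d (insert w S)"
      using minimal S w by (meson finite_insert insert_subset)
    ultimately show False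
      by simp
  qed
  then have "F \<inter> (\<Inter>w\<in>S. H w) = F \<inter> (\<Inter>w\<in>W. H w)"
    using S(2) by blast
  with S that show ?thesis
    by blast
qed

end

section \<open>A determinantal criterion for trivial kernels\<close>

lemma ex_det_mult_nonzero_iff_trivial_kernel:
  fixes A :: "complex mat"
  assumes A: "A \<in> carrier_mat k n"
  shows "(\<exists>M \<in> carrier_mat n k. det (M * A) \<noteq> 0) \<longleftrightarrow>
    (\<forall>v \<in> carrier_vec n. A *\<^sub>v v = 0\<^sub>v k \<longrightarrow> v = 0\<^sub>v n)"
proof
  assume "\<exists>M \<in> carrier_mat n k. det (M * A) \<noteq> 0"
  then obtain M where M: "M \<in> carrier_mat n k" "det (M * A) \<noteq> 0"
    by blast
  show "\<forall>v \<in> carrier_vec n. A *\<^sub>v v = 0\<^sub>v k \<longrightarrow> v = 0\<^sub>v n"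
  proof (intro ballI impI)
    fix v assume v: "v \<in> carrier_vec n" "A *\<^sub>v v = 0\<^sub>v k"
    have "(M * A) *\<^sub>v v = M *\<^sub>v (A *\<^sub>v v)"
      using M(1) A v(1) by (rule assoc_mult_mat_vec)
    also have "\<dots> = 0\<^sub>v n"
      using M(1) v(2) by auto
    finally show "v = 0\<^sub>v n"
      using M v(1) A det_0_iff_vec_prod_zero[of "M * A" n] by auto
  qed
next
  assume inj: "\<forall>v \<in> carrier_vec n. A *\<^sub>v v = 0\<^sub>v k \<longrightarrow> v = 0\<^sub>v n"
  \<comment> \<open>For the conjugate transpose M of A, \<open>v \<bullet>c (M *\<^sub>v (A *\<^sub>v v))\<close> is the squared norm of A v.\<close>
  define M where "M = mat n k (\<lambda>(j, l). cnj (A $$ (l, j)))"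
  have M: "M \<in> carrier_mat n k"
    unfolding M_def by simp
  have "det (M * A) \<noteq> 0"
  proof
    assume "det (M * A) = 0"
    then obtain v where v: "v \<in> carrier_vec n" "v \<noteq> 0\<^sub>v n" "(M * A) *\<^sub>v v = 0\<^sub>v n"
      using det_0_iff_vec_prod_zero[of "M * A" n] A M by auto
    define u where "u = A *\<^sub>v v"
    have u: "u \<in> carrier_vec k"
      unfolding u_def using A v(1) by (rule mult_mat_vec_carrier)
    have "M *\<^sub>v u = 0\<^sub>v n"
      using v(3) assoc_mult_mat_vec[OF M A v(1)] unfolding u_def by simp
    moreover have "v \<bullet>c (M *\<^sub>v u) = u \<bullet>c u"
    proof -
      have Mu: "(M *\<^sub>v u) $ j = (\<Sum>l<k. cnj (A $$ (l, j)) * u $ l)" if "j < n" for j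
        using that u unfolding M_def by (simp add: scalar_prod_def lessThan_atLeast0)
      have Av: "u $ l = (\<Sum>j<n. A $$ (l, j) * v $ j)" if "l < k" for l
        using that A v(1) unfolding u_def by (simp add: scalar_prod_def lessThan_atLeast0)
      have "v \<bullet>c (M *\<^sub>v u) = (\<Sum>j<n. v $ j * cnj (\<Sum>l<k. cnj (A $$ (l, j)) * u $ l))"
        using v(1) M Mu by (simp add: scalar_prod_def conjugate_vec_def lessThan_atLeast0)
      also have "\<dots> = (\<Sum>j<n. \<Sum>l<k. A $$ (l, j) * v $ j * cnj (u $ l))"
        by (simp add: sum_distrib_left mult_ac)
      also have "\<dots> = (\<Sum>l<k. (\<Sum>j<n. A $$ (l, j) * v $ j) * cnj (u $ l))"
        by (subst sum.swap) (simp add: sum_distrib_right)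
      also have "\<dots> = u \<bullet>c u"
        using u Av by (simp add: scalar_prod_def conjugate_vec_def lessThan_atLeast0)
      finally show ?thesis .
    qed
    ultimately have "u \<bullet>c u = 0"
      using v(1) by simp
    then have "A *\<^sub>v v = 0\<^sub>v k"
      using u unfolding u_def by simp
    with inj v(1,2) show False
      by blast
  qed
  with M show "\<exists>M \<in> carrier_mat n k. det (M * A) \<noteq> 0"
    by blast
qed

section \<open>Iterated derivations and the ideal I(F,x)\<close>

fun apply_word :: "('f \<Rightarrow> 'f) list \<Rightarrow> 'f \<Rightarrow> 'f" where
  "apply_word [] f = f"
| "apply_word (D # ws) f = D (apply_word ws f)"

lemma apply_word_append: "apply_word (vs @ ws) f = apply_word vs (apply_word ws f)"
  by (induction vs) auto

definition word_matrix ::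
    "((('a \<Rightarrow> complex) \<Rightarrow> ('a \<Rightarrow> complex)) list) list \<Rightarrow> nat \<Rightarrow> (nat \<Rightarrow> 'a \<Rightarrow> complex) \<Rightarrow> 'a
      \<Rightarrow> complex mat" where
  "word_matrix ws n g x = mat (length ws) n (\<lambda>(l, j). apply_word (ws ! l) (g j) x)"

locale derivation_family =
  fixes X :: "('n::finite \<Rightarrow> complex) set"
    and Fol :: "((('n \<Rightarrow> complex) \<Rightarrow> complex) \<Rightarrow> (('n \<Rightarrow> complex) \<Rightarrow> complex)) set"
  assumes derivation: "D \<in> Fol \<Longrightarrow> is_derivation X D"
begin

lemma derivation_regular:
  assumes "D \<in> Fol" "f \<in> regular_functions X"
  shows "D f \<in> regular_functions X"
proof -
  have "\<forall>f\<in>regular_functions X. D f \<in> regular_functions X"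
    using derivation[OF assms(1)] unfolding is_derivation_def by (elim conjE)
  with assms(2) show ?thesis by blast
qed

lemma derivation_add:
  assumes "D \<in> Fol" "f \<in> regular_functions X" "g \<in> regular_functions X"
  shows "D (f + g) = D f + D g"
proof -
  have "\<forall>f\<in>regular_functions X. \<forall>g\<in>regular_functions X. D (f + g) = D f + D g"
    using derivation[OF assms(1)] unfolding is_derivation_def by (elim conjE)
  with assms(2,3) show ?thesis by blast
qed

lemma derivation_cscale:
  assumes "D \<in> Fol" "f \<in> regular_functions X"
  shows "D (cscale c f) = cscale c (D f)"
proof -
  have "\<forall>c. \<forall>f\<in>regular_functions X. D (cscale c f) = cscale c (D f)"
    using derivation[OF assms(1)] unfolding is_derivation_def by (elim conjE)
  with assms(2) show ?thesis by blast
qed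

lemma derivation_mult:
  assumes "D \<in> Fol" "f \<in> regular_functions X" "g \<in> regular_functions X"
  shows "D (f * g) = f * D g + g * D f"
proof -
  have "\<forall>f\<in>regular_functions X. \<forall>g\<in>regular_functions X. D (f * g) = f * D g + g * D f"
    using derivation[OF assms(1)] unfolding is_derivation_def by (elim conjE)
  with assms(2,3) show ?thesis by blast
qed

lemma apply_word_regular:
  assumes "ws \<in> lists Fol" "f \<in> regular_functions X"
  shows "apply_word ws f \<in> regular_functions X"
  using assms(1)
proof (induction ws)
  case Nil
  then show ?case
    using assms(2) by simp
next
  case (Cons D ws)
  then show ?case
    by (simp add: derivation_regular)
qed

lemma apply_word_add:
  assumes "ws \<in> lists Fol" "f \<in> regular_functions X" "g \<in> regular_functions X"
  shows "apply_word ws (f + g) = apply_word ws f + apply_word ws g"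
  using assms(1)
proof (induction ws)
  case Nil
  then show ?case
    by simp
next
  case (Cons D ws)
  then show ?case
    using derivation_add apply_word_regular assms(2,3) by (simp del: plus_fun_apply)
qed

lemma apply_word_cscale:
  assumes "ws \<in> lists Fol" "f \<in> regular_functions X"
  shows "apply_word ws (cscale c f) = cscale c (apply_word ws f)"
  using assms(1)
proof (induction ws)
  case Nil
  then show ?case
    by simp
next
  case (Cons D ws)
  then show ?case
    using derivation_cscale apply_word_regular assms(2) by simp
qed

lemma apply_word_zero:
  assumes "ws \<in> lists Fol"
  shows "apply_word ws 0 = 0"
  using apply_word_add[OF assms regular_functions_zero regular_functions_zero] by simp

lemma apply_word_lincomb:
  assumes "ws \<in> lists Fol" "finite A" "\<forall>j\<in>A. g j \<in> regular_functions X"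
  shows "apply_word ws (\<Sum>j\<in>A. cscale (c j) (g j)) x = (\<Sum>j\<in>A. c j * apply_word ws (g j) x)"
  using assms(2,3)
proof (induction A rule: finite_induct)
  case empty
  show ?case
    using apply_word_zero[OF assms(1)] by (simp add: zero_fun_def)
next
  case (insert a A)
  let ?S = "\<Sum>j\<in>A. cscale (c j) (g j)"
  have S: "?S \<in> regular_functions X"
    using insert.prems by (intro cvs.subspace_sum[OF subspace_regular_functions] regular_functions_cscale) auto
  have ga: "g a \<in> regular_functions X"
    using insert.prems by simp
  have "apply_word ws (\<Sum>j\<in>insert a A. cscale (c j) (g j)) = apply_word ws (cscale (c a) (g a) + ?S)"
    by (simp only: sum.insert[OF insert.hyps])
  also have "\<dots> = apply_word ws (cscale (c a) (g a)) + apply_word ws ?S"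
    by (rule apply_word_add[OF assms(1) regular_functions_cscale[OF ga] S])
  also have "\<dots> = cscale (c a) (apply_word ws (g a)) + apply_word ws ?S"
    by (simp only: apply_word_cscale[OF assms(1) ga])
  finally have eq: "apply_word ws (\<Sum>j\<in>insert a A. cscale (c j) (g j)) =
      cscale (c a) (apply_word ws (g a)) + apply_word ws ?S" .
  show ?case
    unfolding eq using insert by (simp add: cscale_def)
qed

definition word_ideal :: "('n \<Rightarrow> complex) \<Rightarrow> (('n \<Rightarrow> complex) \<Rightarrow> complex) set" where
  "word_ideal x = {f \<in> regular_functions X. \<forall>ws\<in>lists Fol. apply_word ws f x = 0}"

lemma word_ideal_eq_INT:
  "word_ideal x = (\<Inter>ws\<in>lists Fol. {f \<in> regular_functions X. apply_word ws f x = 0})"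
  unfolding word_ideal_def using lists.Nil by blast

lemma subspace_word_kernel:
  assumes "ws \<in> lists Fol"
  shows "cvs.subspace {f \<in> regular_functions X. apply_word ws f x = 0}"
proof (rule cvs.subspaceI)
  show "0 \<in> {f \<in> regular_functions X. apply_word ws f x = 0}"
    using regular_functions_zero by (simp add: apply_word_zero[OF assms])
  show "f + g \<in> {f \<in> regular_functions X. apply_word ws f x = 0}"
    if "f \<in> {f \<in> regular_functions X. apply_word ws f x = 0}"
      "g \<in> {f \<in> regular_functions X. apply_word ws f x = 0}" for f g
    using that by (simp add: apply_word_add[OF assms] regular_functions_add)
  show "cscale c f \<in> {f \<in> regular_functions X. apply_word ws f x = 0}"
    if "f \<in> {f \<in> regular_functions X. apply_word ws f x = 0}" for c f
  proof -
    have "apply_word ws (cscale c f) = cscale c (apply_word ws f)"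
      using that by (simp add: apply_word_cscale[OF assms])
    with that regular_functions_cscale[of f X c] show ?thesis
      by (simp add: cscale_def)
  qed
qed

lemma subspace_word_ideal: "cvs.subspace (word_ideal x)"
  unfolding word_ideal_eq_INT by (intro cvs.subspace_Int subspace_word_kernel)

lemma derivation_word_ideal:
  assumes "D \<in> Fol" "f \<in> word_ideal x"
  shows "D f \<in> word_ideal x"
proof -
  have "apply_word ws (D f) x = 0" if "ws \<in> lists Fol" for ws
  proof -
    have "ws @ [D] \<in> lists Fol"
      using that assms(1) by simp
    then have "apply_word (ws @ [D]) f x = 0"
      using assms(2) unfolding word_ideal_def by blast
    then show ?thesis
      by (simp add: apply_word_append)
  qed
  with assms show ?thesis
    unfolding word_ideal_def by (simp add: derivation_regular)
qed

lemma apply_word_mult_word_ideal: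
  "ws \<in> lists Fol \<Longrightarrow> a \<in> regular_functions X \<Longrightarrow> f \<in> word_ideal x \<Longrightarrow> apply_word ws (a * f) x = 0"
proof (induction ws arbitrary: a f rule: rev_induct)
  case Nil
  have "apply_word [] f x = 0"
    using Nil.prems(3) lists.Nil unfolding word_ideal_def by blast
  then show ?case
    by simp
next
  case (snoc D ws)
  have D: "D \<in> Fol" and ws: "ws \<in> lists Fol"
    using snoc.prems(1) by auto
  have f: "f \<in> regular_functions X"
    using snoc.prems(3) unfolding word_ideal_def by blast
  have "apply_word (ws @ [D]) (a * f) = apply_word ws (D (a * f))"
    by (simp only: apply_word_append apply_word.simps)
  also have "D (a * f) = a * D f + D a * f"
    using derivation_mult[OF D snoc.prems(2) f] by (simp only: mult.commute[of f])
  also have "apply_word ws (a * D f + D a * f) = apply_word ws (a * D f) + apply_word ws (D a * f)"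
    using regular_functions_mult[OF snoc.prems(2) derivation_regular[OF D f]]
      regular_functions_mult[OF derivation_regular[OF D snoc.prems(2)] f]
    by (rule apply_word_add[OF ws])
  finally have "apply_word (ws @ [D]) (a * f) x = apply_word ws (a * D f) x + apply_word ws (D a * f) x"
    by (simp only: plus_fun_apply)
  also have "\<dots> = 0"
    using snoc.IH[OF ws snoc.prems(2) derivation_word_ideal[OF D snoc.prems(3)]]
      snoc.IH[OF ws derivation_regular[OF D snoc.prems(2)] snoc.prems(3)]
    by (simp only: add_0)
  finally show ?case .
qed

lemma invariant_ideal_at_word_ideal: "invariant_ideal_at X Fol x (word_ideal x)"
proof -
  have regular: "word_ideal x \<subseteq> regular_functions X"
    unfolding word_ideal_def by blast
  have add: "\<forall>f\<in>word_ideal x. \<forall>g\<in>word_ideal x. f + g \<in> word_ideal x"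
    using cvs.subspace_add[OF subspace_word_ideal] by blast
  have mult: "\<forall>a\<in>regular_functions X. \<forall>f\<in>word_ideal x. a * f \<in> word_ideal x"
  proof (intro ballI)
    fix a f assume a: "a \<in> regular_functions X" and f: "f \<in> word_ideal x"
    then have "a * f \<in> regular_functions X"
      using regular regular_functions_mult by blast
    moreover have "\<forall>ws\<in>lists Fol. apply_word ws (a * f) x = 0"
      using apply_word_mult_word_ideal[OF _ a f] by blast
    ultimately show "a * f \<in> word_ideal x"
      unfolding word_ideal_def by blast
  qed
  have vanishing: "word_ideal x \<subseteq> max_ideal X x"
  proof
    fix f assume "f \<in> word_ideal x"
    then have "f \<in> regular_functions X" "apply_word [] f x = 0"
      using lists.Nil unfolding word_ideal_def by blast+
    then show "f \<in> max_ideal X x"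
      unfolding max_ideal_def by simp
  qed
  have invariant: "\<forall>D\<in>Fol. \<forall>f\<in>word_ideal x. D f \<in> word_ideal x"
    using derivation_word_ideal by blast
  show ?thesis
    unfolding invariant_ideal_at_def ideal_of_def
    using regular cvs.subspace_0[OF subspace_word_ideal] add mult vanishing invariant
    by (intro conjI)
qed

lemma subset_word_ideal_if_invariant:
  assumes "invariant_ideal_at X Fol x I"
  shows "I \<subseteq> word_ideal x"
proof
  fix f assume f: "f \<in> I"
  have regular: "I \<subseteq> regular_functions X"
    using assms unfolding invariant_ideal_at_def ideal_of_def by (elim conjE)
  have vanishing: "I \<subseteq> max_ideal X x"
    using assms unfolding invariant_ideal_at_def by (elim conjE)
  have invariant: "\<forall>D\<in>Fol. \<forall>f\<in>I. D f \<in> I"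
    using assms unfolding invariant_ideal_at_def by (elim conjE)
  have "apply_word ws f \<in> I" if "ws \<in> lists Fol" for ws
    using that
  proof (induction ws)
    case Nil
    then show ?case
      using f by simp
  next
    case (Cons D ws)
    then have "D \<in> Fol" "apply_word ws f \<in> I"
      by auto
    then have "D (apply_word ws f) \<in> I"
      by (rule bspec[OF bspec[OF invariant]])
    then show ?case
      by simp
  qed
  then have "\<forall>ws\<in>lists Fol. apply_word ws f x = 0"
    using vanishing unfolding max_ideal_def by blast
  with f regular show "f \<in> word_ideal x"
    unfolding word_ideal_def by blast
qed

lemma I_fol_eq_word_ideal: "I_fol X Fol x = word_ideal x"
  unfolding I_fol_def
  by (intro Greatest_equality invariant_ideal_at_word_ideal subset_word_ideal_if_invariant)

lemma word_matrix_kernel_iff: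
  assumes "set ws \<subseteq> lists Fol" "\<forall>j<n. g j \<in> regular_functions X" "v \<in> carrier_vec n"
  shows "word_matrix ws n g x *\<^sub>v v = 0\<^sub>v (length ws) \<longleftrightarrow>
    (\<forall>w\<in>set ws. apply_word w (\<Sum>j<n. cscale (v $ j) (g j)) x = 0)"
proof -
  have entry: "(word_matrix ws n g x *\<^sub>v v) $ l = apply_word (ws ! l) (\<Sum>j<n. cscale (v $ j) (g j)) x"
    if "l < length ws" for l
  proof -
    have "ws ! l \<in> lists Fol"
      using that assms(1) nth_mem by blast
    then show ?thesis
      using that assms(2,3) apply_word_lincomb[of "ws ! l" "{..<n}" g]
      by (simp add: word_matrix_def scalar_prod_def lessThan_atLeast0 mult.commute)
  qed
  moreover have "dim_vec (word_matrix ws n g x *\<^sub>v v) = length ws"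
    by (simp add: word_matrix_def)
  ultimately show ?thesis
  proof (intro iffI ballI)
    fix w assume zero: "word_matrix ws n g x *\<^sub>v v = 0\<^sub>v (length ws)" and "w \<in> set ws"
    then obtain l where "l < length ws" "w = ws ! l"
      by (auto simp: in_set_conv_nth)
    with zero show "apply_word w (\<Sum>j<n. cscale (v $ j) (g j)) x = 0"
      using entry[of l] by simp
  qed (auto intro!: eq_vecI)
qed

lemma independent_modulo_word_ideal_iff:
  assumes "finite B" "F = cvs.span B" "F \<subseteq> regular_functions X" "\<forall>j<n. g j \<in> F"
  shows "independent_modulo cscale (word_ideal x \<inter> F) n g \<longleftrightarrow>
    (\<exists>ws. set ws \<subseteq> lists Fol \<and>
      (\<forall>v\<in>carrier_vec n. word_matrix ws n g x *\<^sub>v v = 0\<^sub>v (length ws) \<longrightarrow> v = 0\<^sub>v n))"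
proof
  let ?kernel = "\<lambda>ws. {f \<in> regular_functions X. apply_word ws f x = 0}"
  have g: "\<forall>j<n. g j \<in> regular_functions X"
    using assms(3,4) by blast
  have comb: "(\<Sum>j<n. cscale (c j) (g j)) \<in> F" for c
    using assms(2,4) by (auto intro!: cvs.subspace_sum cvs.subspace_scale)
  {
    assume indep: "independent_modulo cscale (word_ideal x \<inter> F) n g"
    obtain S where S: "finite S" "S \<subseteq> lists Fol" "F \<inter> (\<Inter>w\<in>S. ?kernel w) = F \<inter> (\<Inter>w\<in>lists Fol. ?kernel w)"
      by (rule cvs.finite_subfamily_Inter_eq[OF assms(1) _ _ subspace_word_kernel]) (use assms(2) in auto)
    obtain ws where ws: "set ws = S"
      using finite_list[OF S(1)] by blast
    have "v = 0\<^sub>v n"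
      if v: "v \<in> carrier_vec n" "word_matrix ws n g x *\<^sub>v v = 0\<^sub>v (length ws)" for v
    proof -
      have "(\<Sum>j<n. cscale (v $ j) (g j)) \<in> F \<inter> (\<Inter>w\<in>S. ?kernel w)"
        using v word_matrix_kernel_iff[of ws n g v x] S(2) ws g comb assms(3) by auto
      then have "(\<Sum>j<n. cscale (v $ j) (g j)) \<in> word_ideal x \<inter> F"
        unfolding S(3) word_ideal_eq_INT by blast
      then show ?thesis
        using indep v(1) unfolding independent_modulo_def by (auto intro!: eq_vecI)
    qed
    then show "\<exists>ws. set ws \<subseteq> lists Fol \<and>
      (\<forall>v\<in>carrier_vec n. word_matrix ws n g x *\<^sub>v v = 0\<^sub>v (length ws) \<longrightarrow> v = 0\<^sub>v n)"
      using S(2) ws by blast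
  }
  assume "\<exists>ws. set ws \<subseteq> lists Fol \<and>
    (\<forall>v\<in>carrier_vec n. word_matrix ws n g x *\<^sub>v v = 0\<^sub>v (length ws) \<longrightarrow> v = 0\<^sub>v n)"
  then obtain ws where ws: "set ws \<subseteq> lists Fol"
    and inj: "\<forall>v\<in>carrier_vec n. word_matrix ws n g x *\<^sub>v v = 0\<^sub>v (length ws) \<longrightarrow> v = 0\<^sub>v n"
    by blast
  show "independent_modulo cscale (word_ideal x \<inter> F) n g"
    unfolding independent_modulo_def
  proof (intro allI impI)
    fix c j assume c: "(\<Sum>j<n. cscale (c j) (g j)) \<in> word_ideal x \<inter> F" and j: "j < n"
    have "(\<Sum>j<n. cscale (vec n c $ j) (g j)) = (\<Sum>j<n. cscale (c j) (g j))"
      by (intro sum.cong) auto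
    then have "word_matrix ws n g x *\<^sub>v vec n c = 0\<^sub>v (length ws)"
      using c ws word_matrix_kernel_iff[OF ws g, of "vec n c" x] unfolding word_ideal_def by auto
    then have "vec n c = 0\<^sub>v n"
      using inj by simp
    then show "c j = 0"
      using j by (metis index_vec index_zero_vec(1))
  qed
qed

lemma dim_add_le_iff_ex_word_minor_nonzero:
  assumes "finite B" "F = cvs.span B" "F \<subseteq> regular_functions X"
  shows "cvs.dim (word_ideal x \<inter> F) + n \<le> cvs.dim F \<longleftrightarrow>
    (\<exists>g ws M. (\<forall>j<n. g j \<in> F) \<and> set ws \<subseteq> lists Fol \<and> M \<in> carrier_mat n (length ws) \<and>
      det (M * word_matrix ws n g x) \<noteq> 0)"
proof -
  have "cvs.subspace (word_ideal x \<inter> F)"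
    using assms(2) by (intro cvs.subspace_inter subspace_word_ideal) simp
  then have "cvs.dim (word_ideal x \<inter> F) + n \<le> cvs.dim F \<longleftrightarrow>
      (\<exists>g. (\<forall>j<n. g j \<in> F) \<and> independent_modulo cscale (word_ideal x \<inter> F) n g)"
    using assms(2) by (intro cvs.dim_add_le_iff_independent_modulo[OF assms(1)]) auto
  also have "\<dots> \<longleftrightarrow> (\<exists>g ws. (\<forall>j<n. g j \<in> F) \<and> set ws \<subseteq> lists Fol \<and>
      (\<forall>v\<in>carrier_vec n. word_matrix ws n g x *\<^sub>v v = 0\<^sub>v (length ws) \<longrightarrow> v = 0\<^sub>v n))"
    using independent_modulo_word_ideal_iff[OF assms] by blast
  also have "\<dots> \<longleftrightarrow> (\<exists>g ws. (\<forall>j<n. g j \<in> F) \<and> set ws \<subseteq> lists Fol \<and>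
      (\<exists>M\<in>carrier_mat n (length ws). det (M * word_matrix ws n g x) \<noteq> 0))"
  proof -
    have "(\<exists>M\<in>carrier_mat n (length ws). det (M * word_matrix ws n g x) \<noteq> 0) \<longleftrightarrow>
        (\<forall>v\<in>carrier_vec n. word_matrix ws n g x *\<^sub>v v = 0\<^sub>v (length ws) \<longrightarrow> v = 0\<^sub>v n)" for ws g
      by (rule ex_det_mult_nonzero_iff_trivial_kernel) (simp add: word_matrix_def)
    then show ?thesis
      by (simp only:)
  qed
  finally show ?thesis
    by blast
qed

lemma polynomial_on_word_minor:
  assumes "set ws \<subseteq> lists Fol" "\<forall>j<n. g j \<in> regular_functions X" "M \<in> carrier_mat n (length ws)"
  shows "polynomial_on X (\<lambda>x. det (M * word_matrix ws n g x))"
proof (rule polynomial_on_det)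
  show "M * word_matrix ws n g x \<in> carrier_mat n n" for x
    using assms(3) by (simp add: word_matrix_def)
  fix i j assume "i < n" "j < n"
  then have entry: "(M * word_matrix ws n g x) $$ (i, j) =
      (\<Sum>l<length ws. M $$ (i, l) * apply_word (ws ! l) (g j) x)" for x
    using assms(3) by (simp add: word_matrix_def scalar_prod_def lessThan_atLeast0)
  have "polynomial_on X (\<lambda>x. apply_word (ws ! l) (g j) x)" if "l < length ws" for l
    using that assms(1,2) \<open>j < n\<close> nth_mem by (blast intro: polynomial_on_regular apply_word_regular)
  then have "polynomial_on X (\<lambda>x. \<Sum>l<length ws. M $$ (i, l) * apply_word (ws ! l) (g j) x)"
    by (intro polynomial_on_sum polynomial_on_mult polynomial_on_const) auto
  with entry show "polynomial_on X (\<lambda>x. (M * word_matrix ws n g x) $$ (i, j))"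
    by simp
qed

end

theorem mainTheorem9:
  fixes X :: "('n::finite \<Rightarrow> complex) set"
    and Fol :: "((('n \<Rightarrow> complex) \<Rightarrow> complex) \<Rightarrow> (('n \<Rightarrow> complex) \<Rightarrow> complex)) set"
    and F :: "(('n \<Rightarrow> complex) \<Rightarrow> complex) set"
  assumes "irreducible_affine_variety X"
    and "algebraic_foliation X Fol"
    and "F \<subseteq> regular_functions X"
    and "module.subspace cscale F"
    and "\<exists>B. finite B \<and> F = module.span cscale B"
  shows "\<forall>r::nat. zariski_closed {x \<in> X. phi_F X Fol F x \<le> r}"
proof
  fix r :: nat
  interpret derivation_family X Fol
    using assms(2) unfolding algebraic_foliation_def by unfold_locales blast
  obtain B where B: "finite B" "F = cvs.span B"
    using assms(5) by blast
  define minors where "minors = {(g, ws, M). (\<forall>j<Suc r. g j \<in> F) \<and> set ws \<subseteq> lists Fol \<and>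
    (M :: complex mat) \<in> carrier_mat (Suc r) (length ws)}"
  define minor where "minor = (\<lambda>(g, ws, M) (x :: 'n \<Rightarrow> complex). det (M * word_matrix ws (Suc r) g x))"
  have "phi_F X Fol F x \<le> r \<longleftrightarrow> (\<forall>i\<in>minors. minor i x = 0)" for x
    using dim_add_le_iff_ex_word_minor_nonzero[OF B assms(3), of x "Suc r"]
    unfolding phi_F_def I_fol_eq_word_ideal minors_def minor_def by auto
  moreover have "zariski_closed {x \<in> X. \<forall>i\<in>minors. minor i x = 0}"
  proof (rule zariski_closed_zeros_within)
    show "zariski_closed X"
      using assms(1) unfolding irreducible_affine_variety_def by blast
    show "polynomial_on X (minor i)" if "i \<in> minors" for i
      using that assms(3) unfolding minors_def minor_def
      by (auto intro!: polynomial_on_word_minor)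
  qed
  ultimately show "zariski_closed {x \<in> X. phi_F X Fol F x \<le> r}"
    by simp
qed

end
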